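(* Let $k$ be a positive integer and $l\in\{k+2,k+3,k+4\}$. Let $N^l_k$ be the lattice ${\mathbb{Z}}^{l+1}$ with basis $\ell_0,\dots,\ell_l$ and scalar product $(\ell_0,\ell_0)=k$, $(\ell_i,\ell_i)=-1$ for $1\le i\le l$, $(\ell_i,\ell_j)=0$ for $i\ne j$, let $\omega=-\frac{k+2}{k}\ell_0+\ell_1+\dots+\ell_l$, and let $R^l_k$ be the set of $\ell\in N^l_k$ with $(\ell,\ell)=-2$ and $(\ell,\omega)=0$. Then the vectors $\pm(\ell_i-\ell_j)$ for $1\le i<j\le l$, together with $\pm\big(\ell_0-\sum_{i\in I}\ell_i\big)$ for subsets $I\subset\{1,\dots,l\}$ with $|I|=k+2$, lie in $R^l_k$ and form a root system of type $A_{k+1}\times A_1$ if $l=k+2$, $A_{k+3}$ if $l=k+3$, and $D_{k+4}$ if $l=k+4$.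
   Context: Root systems are taken with respect to the negative of the scalar product, which is positive definite on the orthogonal complement of $\omega$. *)

theory Defs
  imports "HOL-Analysis.Analysis"
begin

text \<open>Vectors are represented as functions nat => real (coordinates with respect to
  the basis l_0, l_1, ...); lattice vectors of N^l_k are integer valued and vanish
  beyond index l.\<close>

definition ell :: "nat \<Rightarrow> nat \<Rightarrow> real" where
  "ell i = (\<lambda>j. if j = i then 1 else 0)"

definition vneg :: "(nat \<Rightarrow> real) \<Rightarrow> nat \<Rightarrow> real" where
  "vneg v = (\<lambda>j. - v j)"

definition vdiff :: "(nat \<Rightarrow> real) \<Rightarrow> (nat \<Rightarrow> real) \<Rightarrow> nat \<Rightarrow> real" where
  "vdiff v w = (\<lambda>j. v j - w j)"

definition vsum :: "nat set \<Rightarrow> nat \<Rightarrow> real" where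
  "vsum I = (\<lambda>j. \<Sum>i\<in>I. ell i j)"

definition latN :: "nat \<Rightarrow> (nat \<Rightarrow> real) set" where
  "latN l = {v. (\<forall>i. v i \<in> \<int>) \<and> (\<forall>i>l. v i = 0)}"

definition form :: "nat \<Rightarrow> nat \<Rightarrow> (nat \<Rightarrow> real) \<Rightarrow> (nat \<Rightarrow> real) \<Rightarrow> real" where
  "form k l v w = real k * v 0 * w 0 - (\<Sum>i=1..l. v i * w i)"

definition omega :: "nat \<Rightarrow> nat \<Rightarrow> nat \<Rightarrow> real" where
  "omega k l = (\<lambda>j. if j = 0 then - (real k + 2) / real k else if j \<le> l then 1 else 0)"

definition rootsR :: "nat \<Rightarrow> nat \<Rightarrow> (nat \<Rightarrow> real) set" where
  "rootsR k l = {v \<in> latN l. form k l v v = -2 \<and> form k l v (omega k l) = 0}"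

definition listed_roots :: "nat \<Rightarrow> nat \<Rightarrow> (nat \<Rightarrow> real) set" where
  "listed_roots k l =
     {vdiff (ell i) (ell j) | i j. 1 \<le> i \<and> i < j \<and> j \<le> l}
   \<union> {vneg (vdiff (ell i) (ell j)) | i j. 1 \<le> i \<and> i < j \<and> j \<le> l}
   \<union> {vdiff (ell 0) (vsum I) | I. I \<subseteq> {1..l} \<and> card I = k + 2}
   \<union> {vneg (vdiff (ell 0) (vsum I)) | I. I \<subseteq> {1..l} \<and> card I = k + 2}"

definition rspan :: "(nat \<Rightarrow> real) set \<Rightarrow> (nat \<Rightarrow> real) set" where
  "rspan S = {x. \<exists>F c. finite F \<and> F \<subseteq> S \<and> x = (\<lambda>j. \<Sum>v\<in>F. c v * v j)}"

definition refl_Q :: "((nat \<Rightarrow> real) \<Rightarrow> (nat \<Rightarrow> real) \<Rightarrow> real) \<Rightarrow> (nat \<Rightarrow> real)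
    \<Rightarrow> (nat \<Rightarrow> real) \<Rightarrow> nat \<Rightarrow> real" where
  "refl_Q Q a b = (\<lambda>j. b j - (2 * Q b a / Q a a) * a j)"

definition root_system :: "((nat \<Rightarrow> real) \<Rightarrow> (nat \<Rightarrow> real) \<Rightarrow> real) \<Rightarrow> (nat \<Rightarrow> real) set \<Rightarrow> bool" where
  "root_system Q S \<longleftrightarrow>
     finite S \<and> (\<lambda>_. 0) \<notin> S \<and>
     (\<forall>x\<in>rspan S. x \<noteq> (\<lambda>_. 0) \<longrightarrow> Q x x > 0) \<and>
     (\<forall>a\<in>S. \<forall>b\<in>S. refl_Q Q a b \<in> S) \<and>
     (\<forall>a\<in>S. \<forall>b\<in>S. 2 * Q b a / Q a a \<in> \<int>) \<and>
     (\<forall>a\<in>S. \<forall>c::real. (\<lambda>j. c * a j) \<in> S \<longrightarrow> c = 1 \<or> c = -1)"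

definition root_iso :: "(nat \<Rightarrow> real) set \<Rightarrow> (nat \<Rightarrow> real) set \<Rightarrow> bool" where
  "root_iso S T \<longleftrightarrow>
     (\<exists>g :: (nat \<Rightarrow> real) \<Rightarrow> (nat \<Rightarrow> real).
        (\<forall>x y. g (\<lambda>j. x j + y j) = (\<lambda>j. g x j + g y j)) \<and>
        (\<forall>c x. g (\<lambda>j. c * x j) = (\<lambda>j. c * g x j)) \<and>
        inj_on g (rspan S) \<and> g ` S = T)"

text \<open>Standard models (in the standard Euclidean coordinates e_0, e_1, ...).\<close>
definition std_A :: "nat \<Rightarrow> (nat \<Rightarrow> real) set" where
  "std_A n = {vdiff (ell i) (ell j) | i j. i \<le> n \<and> j \<le> n \<and> i \<noteq> j}"

definition std_A_A1 :: "nat \<Rightarrow> (nat \<Rightarrow> real) set" where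
  "std_A_A1 n = std_A n \<union> {vdiff (ell (n+1)) (ell (n+2)), vdiff (ell (n+2)) (ell (n+1))}"

definition std_D :: "nat \<Rightarrow> (nat \<Rightarrow> real) set" where
  "std_D n = {(\<lambda>j. s * ell i j + t * ell i' j) | i i' s t.
                i < i' \<and> i' < n \<and> s \<in> {1, -1} \<and> t \<in> {1, -1}}"

end

theory Submission
  imports Defs
begin

text \<open>Every listed vector has norm -2 and is orthogonal to omega, and orthogonality to omega
  means x_1 + ... + x_l = -(k + 2) x_0; on that hyperplane Cauchy--Schwarz makes -(x, x)
  positive definite because l \<le> k + 4. The reflection in l_i - l_j transposes the coordinates
  i and j, and the reflections in the vectors l_0 - (sum of l_i over I) are computed directly,
  using that two (k + 2)-subsets of {1..l} meet in at least k elements. For the isomorphisms,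
  the coordinates x_i + x_0 send l_0 - (sum of l_i over I) to the indicator of the complement of I,
  a set with l - k - 2 elements; so these roots become e_a - e_0 for l = k + 3, e_a + e_b for
  l = k + 4, and the extra A_1 root for l = k + 2.\<close>

definition sum_root :: "real \<Rightarrow> nat set \<Rightarrow> nat \<Rightarrow> real" where
  "sum_root s I = (\<lambda>m. if m = 0 then s else if m \<in> I then - s else 0)"

lemma sum_root_0 [simp]: "sum_root s I 0 = s"
  by (simp add: sum_root_def)

lemma vdiff_ell_apply:
  "vdiff (ell i) (ell j) m = (if m = i then 1 else 0) - (if m = j then 1 else 0)"
  by (simp add: vdiff_def ell_def)

lemma vneg_vdiff_ell: "vneg (vdiff (ell i) (ell j)) = vdiff (ell j) (ell i)"
  by (auto simp: vneg_def vdiff_def)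

lemma vdiff_ell0_vsum:
  assumes "finite I" "0 \<notin> I"
  shows "vdiff (ell 0) (vsum I) = sum_root 1 I" "vneg (vdiff (ell 0) (vsum I)) = sum_root (-1) I"
  using assms by (auto simp: vneg_def vdiff_def vsum_def ell_def sum_root_def)

lemma sign_mult_vdiff_ell:
  assumes "s \<in> {1, -1}"
  shows "(\<lambda>m. s * vdiff (ell i) (ell j) m)
    = (if s = 1 then vdiff (ell i) (ell j) else vdiff (ell j) (ell i))"
  using assms by (auto simp: fun_eq_iff vdiff_ell_apply)

lemma vdiff_ell_eq_combination: "vdiff (ell i) (ell j) = (\<lambda>m. 1 * ell i m + (-1) * ell j m)"
  by (simp add: fun_eq_iff vdiff_def)

lemma listed_roots_cases:
  assumes "v \<in> listed_roots k l"
  obtains (diff) i j where "i \<in> {1..l}" "j \<in> {1..l}" "i \<noteq> j" "v = vdiff (ell i) (ell j)"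
    | (sum) s I where "s \<in> {1, -1}" "I \<subseteq> {1..l}" "card I = k + 2" "v = sum_root s I"
proof -
  from assms consider
      (pos_diff) i j where "1 \<le> i" "i < j" "j \<le> l" "v = vdiff (ell i) (ell j)"
    | (neg_diff) i j where "1 \<le> i" "i < j" "j \<le> l" "v = vneg (vdiff (ell i) (ell j))"
    | (pos_sum) I where "I \<subseteq> {1..l}" "card I = k + 2" "v = vdiff (ell 0) (vsum I)"
    | (neg_sum) I where "I \<subseteq> {1..l}" "card I = k + 2" "v = vneg (vdiff (ell 0) (vsum I))"
    unfolding listed_roots_def by blast
  then show thesis
  proof cases
    case (pos_diff i j)
    then show thesis by (intro diff[of i j]) auto
  next
    case (neg_diff i j)
    then show thesis by (intro diff[of j i]) (auto simp: vneg_vdiff_ell)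
  next
    case (pos_sum I)
    then have "finite I" "0 \<notin> I" using finite_subset by auto
    with pos_sum show thesis by (intro sum[of 1 I]) (auto simp: vdiff_ell0_vsum(1))
  next
    case (neg_sum I)
    then have "finite I" "0 \<notin> I" using finite_subset by auto
    with neg_sum show thesis by (intro sum[of "-1" I]) (auto simp: vdiff_ell0_vsum(2))
  qed
qed

lemma diff_root_in_listed_roots:
  assumes "i \<in> {1..l}" "j \<in> {1..l}" "i \<noteq> j"
  shows "vdiff (ell i) (ell j) \<in> listed_roots k l"
proof (cases "i < j")
  case True
  then show ?thesis using assms unfolding listed_roots_def by auto
next
  case False
  have "vneg (vdiff (ell j) (ell i)) \<in> {vneg (vdiff (ell i) (ell j)) |i j. 1 \<le> i \<and> i < j \<and> j \<le> l}"
    using False assms by (intro CollectI exI[of _ j] exI[of _ i]) auto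
  then have "vneg (vdiff (ell j) (ell i)) \<in> listed_roots k l"
    unfolding listed_roots_def by blast
  then show ?thesis by (simp add: vneg_vdiff_ell)
qed

lemma sum_root_in_listed_roots:
  assumes "s \<in> {1, -1}" "I \<subseteq> {1..l}" "card I = k + 2"
  shows "sum_root s I \<in> listed_roots k l"
proof -
  have "finite I" "0 \<notin> I" using assms(2) finite_subset by auto
  then show ?thesis using assms vdiff_ell0_vsum[of I] unfolding listed_roots_def by auto
qed

lemma listed_roots_sign_mult:
  assumes "t \<in> {1, -1}" "v \<in> listed_roots k l"
  shows "(\<lambda>m. t * v m) \<in> listed_roots k l"
  using assms(2)
proof (cases rule: listed_roots_cases)
  case (diff i j)
  then show ?thesis
    using sign_mult_vdiff_ell[OF assms(1), of i j] by (simp add: diff_root_in_listed_roots)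
next
  case (sum s I)
  then have "(\<lambda>m. t * v m) = sum_root (t * s) I" by (auto simp: fun_eq_iff sum_root_def)
  moreover have "t * s \<in> {1, -1}" using assms(1) sum(1) by auto
  ultimately show ?thesis using sum by (simp add: sum_root_in_listed_roots)
qed

lemma finite_listed_roots: "finite (listed_roots k l)"
proof (rule finite_subset)
  show "listed_roots k l \<subseteq> (\<lambda>(i, j). vdiff (ell i) (ell j)) ` ({1..l} \<times> {1..l})
      \<union> (\<lambda>(s, I). sum_root s I) ` ({1, -1} \<times> Pow {1..l})"
    by (auto elim!: listed_roots_cases)
qed auto

lemma form_sym: "form k l v w = form k l w v"
  by (simp add: form_def mult.commute mult.left_commute)

lemma form_sum_left:
  "form k l (\<lambda>j. \<Sum>v\<in>F. c v * v j) w = (\<Sum>v\<in>F. c v * form k l v w)"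
  by (simp add: form_def sum_distrib_left sum_distrib_right sum_subtractf sum.swap[of _ F]
      algebra_simps)

lemma form_Ints: "(\<forall>m. v m \<in> \<int>) \<Longrightarrow> (\<forall>m. w m \<in> \<int>) \<Longrightarrow> form k l v w \<in> \<int>"
  unfolding form_def by (intro Ints_diff Ints_mult Ints_sum Ints_of_nat) auto

lemma form_diff_root:
  assumes "i \<in> {1..l}" "j \<in> {1..l}" "i \<noteq> j"
  shows "form k l (vdiff (ell i) (ell j)) w = w j - w i"
proof -
  have "(\<Sum>m=1..l. vdiff (ell i) (ell j) m * w m)
      = (\<Sum>m=1..l. (if m = i then w m else 0) - (if m = j then w m else 0))"
    by (rule sum.cong) (auto simp: vdiff_ell_apply)
  then show ?thesis using assms by (simp add: form_def vdiff_ell_apply sum_subtractf)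
qed

lemma form_sum_root:
  assumes "I \<subseteq> {1..l}"
  shows "form k l (sum_root s I) w = s * (real k * w 0 + (\<Sum>m\<in>I. w m))"
proof -
  have "(\<Sum>m=1..l. sum_root s I m * w m) = (\<Sum>m=1..l. if m \<in> I then - s * w m else 0)"
    by (rule sum.cong) (auto simp: sum_root_def)
  also have "\<dots> = - s * (\<Sum>m\<in>I. w m)"
    using assms by (simp add: sum.inter_restrict[symmetric] Int_absorb1 sum_distrib_left)
  finally show ?thesis by (simp add: form_def sum_root_def algebra_simps)
qed

lemma sum_diff_root:
  "finite I \<Longrightarrow>
    (\<Sum>m\<in>I. vdiff (ell p) (ell q) m) = (if p \<in> I then 1 else 0) - (if q \<in> I then 1 else 0)"
  by (simp add: vdiff_ell_apply sum_subtractf)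

lemma sum_sum_root:
  assumes "finite I" "0 \<notin> I"
  shows "(\<Sum>m\<in>I. sum_root t J m) = - t * real (card (I \<inter> J))"
proof -
  have "(\<Sum>m\<in>I. sum_root t J m) = (\<Sum>m\<in>I. if m \<in> J then - t else 0)"
    by (rule sum.cong) (use assms(2) in \<open>auto simp: sum_root_def\<close>)
  then show ?thesis using assms(1) by (simp add: sum.inter_restrict[symmetric])
qed

lemma form_omega_eq_0_iff:
  assumes "k > 0"
  shows "form k l x (omega k l) = 0 \<longleftrightarrow> (\<Sum>m=1..l. x m) = - (real k + 2) * x 0"
proof -
  have "(\<Sum>m=1..l. x m * omega k l m) = (\<Sum>m=1..l. x m)"
    by (rule sum.cong) (auto simp: omega_def)
  then have "form k l x (omega k l) = - ((\<Sum>m=1..l. x m) + (real k + 2) * x 0)"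
    using assms by (simp add: form_def omega_def) (simp add: algebra_simps)
  then show ?thesis by linarith
qed

lemma listed_roots_subset_rootsR:
  assumes "k > 0"
  shows "listed_roots k l \<subseteq> rootsR k l"
proof
  fix v assume "v \<in> listed_roots k l"
  then show "v \<in> rootsR k l"
  proof (cases rule: listed_roots_cases)
    case (diff i j)
    have "form k l v (omega k l) = 0"
      using diff by (simp add: form_diff_root) (simp add: omega_def)
    then show ?thesis using diff by (auto simp: rootsR_def latN_def form_diff_root vdiff_ell_apply)
  next
    case (sum s I)
    have I: "finite I" "0 \<notin> I" using sum(2) finite_subset by auto
    have "form k l v v = s * s * (real k - real (k + 2))"
      using sum I by (simp add: form_sum_root sum_sum_root algebra_simps)
    moreover have "(\<Sum>m=1..l. v m) = - (real k + 2) * v 0"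
      using sum sum_sum_root[of "{1..l}" s I]
      by (simp add: Int_absorb1) (simp add: sum_root_def algebra_simps)
    ultimately show ?thesis
      using sum assms by (auto simp: rootsR_def latN_def form_omega_eq_0_iff) (auto simp: sum_root_def)
  qed
qed

definition omega_perp :: "nat \<Rightarrow> nat \<Rightarrow> (nat \<Rightarrow> real) set" where
  "omega_perp k l = {x. (\<forall>m>l. x m = 0) \<and> (\<Sum>m=1..l. x m) = - (real k + 2) * x 0}"

lemma rspan_subset_omega_perp:
  assumes "k > 0" "S \<subseteq> rootsR k l"
  shows "rspan S \<subseteq> omega_perp k l"
proof
  fix x assume "x \<in> rspan S"
  then obtain F c where F: "F \<subseteq> S" and x: "x = (\<lambda>j. \<Sum>v\<in>F. c v * v j)"
    unfolding rspan_def by blast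
  have "\<forall>v\<in>F. (\<forall>m>l. v m = 0) \<and> form k l v (omega k l) = 0"
    using F assms(2) by (auto simp: rootsR_def latN_def)
  then have "(\<forall>m>l. x m = 0) \<and> form k l x (omega k l) = 0"
    by (auto simp: x form_sum_left intro!: sum.neutral)
  then show "x \<in> omega_perp k l"
    using assms(1) by (simp add: omega_perp_def form_omega_eq_0_iff)
qed

text \<open>By Cauchy--Schwarz, l (x_1^2 + ... + x_l^2) \<ge> (x_1 + ... + x_l)^2 = (k + 2)^2 x_0^2,
  and (k + 2)^2 - l k \<ge> 4 as long as l \<le> k + 4.\<close>
lemma form_neg_on_omega_perp:
  assumes "l \<le> k + 4" "x \<in> omega_perp k l" "x \<noteq> (\<lambda>_. 0)"
  shows "form k l x x < 0"
proof -
  define Q where "Q = (\<Sum>m=1..l. (x m)\<^sup>2)"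
  have form_x: "form k l x x = real k * (x 0)\<^sup>2 - Q"
    by (simp add: form_def Q_def power2_eq_square)
  have vanish: "\<forall>m>l. x m = 0" and sum_x: "(\<Sum>m=1..l. x m) = - (real k + 2) * x 0"
    using assms(2) by (auto simp: omega_perp_def)
  show ?thesis
  proof (cases "x 0 = 0")
    case True
    obtain m where "x m \<noteq> 0" using assms(3) by auto
    with True vanish have "m \<in> {1..l}" by (cases "m = 0") (auto simp: not_less)
    with \<open>x m \<noteq> 0\<close> have "Q > 0"
      unfolding Q_def by (intro sum_pos2) auto
    then show ?thesis using True form_x by simp
  next
    case False
    have "(\<Sum>m=1..l. x m)\<^sup>2 = (real k + 2)\<^sup>2 * (x 0)\<^sup>2"
      unfolding sum_x by (simp add: power_mult_distrib power2_eq_square algebra_simps)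
    then have cauchy_schwarz: "(real k + 2)\<^sup>2 * (x 0)\<^sup>2 \<le> real l * Q"
      using sum_squared_le_sum_of_squares[of x "{1..l}"] by (simp add: Q_def mult.commute)
    have "real l * real k + 4 \<le> (real k + 2)\<^sup>2"
    proof -
      have "real l * real k \<le> (real k + 4) * real k"
        using assms(1) by (intro mult_right_mono) auto
      then show ?thesis by (simp add: power2_eq_square algebra_simps)
    qed
    then have "(real l * real k + 4) * (x 0)\<^sup>2 \<le> (real k + 2)\<^sup>2 * (x 0)\<^sup>2"
      by (rule mult_right_mono) simp
    moreover have "(x 0)\<^sup>2 > 0" using False by simp
    ultimately have "real l * (real k * (x 0)\<^sup>2) < real l * Q"
      using cauchy_schwarz by (simp only: distrib_right mult.assoc)
    then have "real k * (x 0)\<^sup>2 < Q"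
      by (rule mult_left_less_imp_less) simp
    then show ?thesis using form_x by simp
  qed
qed

lemma refl_Q_neg_form:
  assumes "form k l a a = -2"
  shows "refl_Q (\<lambda>v w. - form k l v w) a b = (\<lambda>m. b m + form k l a b * a m)"
  using assms by (simp add: refl_Q_def form_sym[of k l b a])

lemma root_system_subset_rootsR:
  assumes "k > 0" "l \<le> k + 4" "finite S" "S \<subseteq> rootsR k l"
    and reflect: "\<And>a b. a \<in> S \<Longrightarrow> b \<in> S \<Longrightarrow> refl_Q (\<lambda>v w. - form k l v w) a b \<in> S"
  shows "root_system (\<lambda>v w. - form k l v w) S"
  unfolding root_system_def
proof (intro conjI ballI allI impI)
  have root: "form k l a a = -2" "\<forall>m. a m \<in> \<int>" if "a \<in> S" for a
    using that assms(4) by (auto simp: rootsR_def latN_def)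
  show "finite S" by fact
  show "(\<lambda>_. 0) \<notin> S"
    using root(1)[of "\<lambda>_. 0"] by (auto simp: form_def)
  show "0 < - form k l x x" if "x \<in> rspan S" "x \<noteq> (\<lambda>_. 0)" for x
    using form_neg_on_omega_perp[OF assms(2) _ that(2)] rspan_subset_omega_perp[OF assms(1,4)]
      that(1)
    by auto
  show "refl_Q (\<lambda>v w. - form k l v w) a b \<in> S" if "a \<in> S" "b \<in> S" for a b
    using reflect that .
  show "2 * - form k l b a / - form k l a a \<in> \<int>" if "a \<in> S" "b \<in> S" for a b
    using root[OF that(1)] root[OF that(2)] form_Ints[of b a k l] by simp
  show "c = 1 \<or> c = -1" if "a \<in> S" "(\<lambda>j. c * a j) \<in> S" for a c
  proof -
    have "form k l (\<lambda>j. c * a j) (\<lambda>j. c * a j) = c\<^sup>2 * form k l a a"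
      by (simp add: form_def power2_eq_square sum_distrib_left algebra_simps)
    then have "c\<^sup>2 = 1" using root(1)[OF that(1)] root(1)[OF that(2)] by simp
    then show ?thesis by (simp add: power2_eq_1_iff)
  qed
qed

lemma listed_roots_permute:
  assumes "p permutes {1..l}" "v \<in> listed_roots k l"
  shows "(\<lambda>m. v (p m)) \<in> listed_roots k l"
  using assms(2)
proof (cases rule: listed_roots_cases)
  case (diff i j)
  have inv_p: "inv p permutes {1..l}" using assms(1) by (rule permutes_inv)
  have "p m = n \<longleftrightarrow> m = inv p n" for m n
    using permutes_inverses[OF assms(1)] by metis
  then have "(\<lambda>m. v (p m)) = vdiff (ell (inv p i)) (ell (inv p j))"
    using diff by (simp add: fun_eq_iff vdiff_ell_apply)
  moreover have "inv p i \<in> {1..l}" "inv p j \<in> {1..l}"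
    using diff by (simp_all only: permutes_in_image[OF inv_p])
  moreover have "inv p i \<noteq> inv p j"
    using diff assms(1) by (metis permutes_inverses(1))
  ultimately show ?thesis by (simp add: diff_root_in_listed_roots)
next
  case (sum s I)
  have "p 0 = 0" using assms(1) by (simp add: permutes_not_in)
  then have "p m = 0 \<longleftrightarrow> m = 0" for m
    using permutes_inverses[OF assms(1)] by metis
  then have "(\<lambda>m. v (p m)) = sum_root s (p -` I)"
    using sum by (simp add: fun_eq_iff sum_root_def)
  moreover have "p -` I \<subseteq> {1..l}"
    using sum(2) permutes_in_image[OF assms(1)] by auto
  moreover have "card (p -` I) = card I"
    using assms(1) by (simp add: card_vimage_inj permutes_inj permutes_surj)
  ultimately show ?thesis using sum by (simp add: sum_root_in_listed_roots)
qed

lemma reflect_diff_root: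
  assumes "i \<in> {1..l}" "j \<in> {1..l}" "i \<noteq> j"
  shows "(\<lambda>m. b m + form k l (vdiff (ell i) (ell j)) b * vdiff (ell i) (ell j) m)
    = (\<lambda>m. b (Transposition.transpose i j m))"
  using assms by (auto simp: form_diff_root vdiff_ell_apply Transposition.transpose_def)

lemma reflect_sum_root_diff_root:
  assumes "s \<in> {1, -1}" "I \<subseteq> {1..l}" "card I = k + 2"
    and "p \<in> {1..l}" "q \<in> {1..l}" "p \<noteq> q"
  shows "(\<lambda>m. vdiff (ell p) (ell q) m
      + form k l (sum_root s I) (vdiff (ell p) (ell q)) * sum_root s I m) \<in> listed_roots k l"
proof -
  have I: "finite I" "0 \<notin> I" using assms(2) finite_subset by auto
  then have form: "form k l (sum_root s I) (vdiff (ell p) (ell q))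
      = s * ((if p \<in> I then 1 else 0) - (if q \<in> I then 1 else 0))"
    using assms by (simp add: form_sum_root sum_diff_root) (simp add: vdiff_ell_apply)
  consider "p \<in> I \<longleftrightarrow> q \<in> I" | "p \<in> I" "q \<notin> I" | "p \<notin> I" "q \<in> I" by blast
  then show ?thesis
  proof cases
    case 1
    then show ?thesis using assms by (simp add: form diff_root_in_listed_roots)
  next
    case 2
    have "(\<lambda>m. vdiff (ell p) (ell q) m
        + form k l (sum_root s I) (vdiff (ell p) (ell q)) * sum_root s I m) = sum_root 1 (insert q (I - {p}))"
      unfolding form using 2 assms I by (auto simp: fun_eq_iff sum_root_def vdiff_ell_apply)
    moreover have "sum_root 1 (insert q (I - {p})) \<in> listed_roots k l"
      using 2 I assms by (intro sum_root_in_listed_roots) auto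
    ultimately show ?thesis by simp
  next
    case 3
    have "(\<lambda>m. vdiff (ell p) (ell q) m
        + form k l (sum_root s I) (vdiff (ell p) (ell q)) * sum_root s I m) = sum_root (-1) (insert p (I - {q}))"
      unfolding form using 3 assms I by (auto simp: fun_eq_iff sum_root_def vdiff_ell_apply)
    moreover have "sum_root (-1) (insert p (I - {q})) \<in> listed_roots k l"
      using 3 I assms by (intro sum_root_in_listed_roots) auto
    ultimately show ?thesis by simp
  qed
qed

text \<open>Here l \<le> k + 4 forces |I \<inter> J| \<ge> k, so the pairing of two sum roots is 0 or \<plusminus>1 unless
  they are equal up to sign.\<close>
lemma reflect_sum_root_sum_root:
  assumes "l \<le> k + 4" "s \<in> {1, -1}" "I \<subseteq> {1..l}" "card I = k + 2"
    "t \<in> {1, -1}" "J \<subseteq> {1..l}" "card J = k + 2"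
  shows "(\<lambda>m. sum_root t J m + form k l (sum_root s I) (sum_root t J) * sum_root s I m)
    \<in> listed_roots k l"
proof -
  have fin: "finite I" "finite J" "0 \<notin> I" using assms(3,6) finite_subset by auto
  define c where "c = card (I \<inter> J)"
  have form: "form k l (sum_root s I) (sum_root t J) = s * t * (real k - real c)"
    using assms(3) fin by (simp add: form_sum_root sum_sum_root c_def algebra_simps)
  have reflection: "(\<lambda>m. sum_root t J m + form k l (sum_root s I) (sum_root t J) * sum_root s I m)
      = (\<lambda>m. t * (sum_root 1 J m + (real k - real c) * sum_root 1 I m))"
    unfolding form using assms(2,5) by (auto simp: fun_eq_iff sum_root_def algebra_simps)
  have "card (I \<union> J) \<le> l" using card_mono[of "{1..l}" "I \<union> J"] assms(3,6) by auto
  then have "k \<le> c" using card_Un_Int[of I J] fin assms(1,4,7) by (simp add: c_def)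
  moreover have "c \<le> k + 2" using card_mono[of I "I \<inter> J"] fin assms(4) by (simp add: c_def)
  ultimately consider "c = k" | "c = k + 1" | "c = k + 2" by linarith
  then have "(\<lambda>m. sum_root 1 J m + (real k - real c) * sum_root 1 I m) \<in> listed_roots k l"
  proof cases
    case 1
    then show ?thesis using assms by (simp add: sum_root_in_listed_roots)
  next
    case 2
    have "card (I - J) = 1" "card (J - I) = 1"
      using 2 fin assms(4,7) by (simp_all add: card_Diff_subset_Int c_def Int_commute)
    then obtain a b where ab: "I - J = {a}" "J - I = {b}" by (meson card_1_singletonE)
    then have a: "a \<in> I" "a \<notin> J" and b: "b \<in> J" "b \<notin> I" by blast+
    have same: "m \<in> I \<longleftrightarrow> m \<in> J" if "m \<noteq> a" "m \<noteq> b" for m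
      using ab that by blast
    have ab_range: "a \<in> {1..l}" "b \<in> {1..l}" "a \<noteq> b" using a b assms(3,6) by auto
    have "(\<lambda>m. sum_root 1 J m + (real k - real c) * sum_root 1 I m) = vdiff (ell a) (ell b)"
    proof
      fix m
      show "sum_root 1 J m + (real k - real c) * sum_root 1 I m = vdiff (ell a) (ell b) m"
        using 2 a b same[of m] ab_range by (simp add: sum_root_def vdiff_ell_apply)
    qed
    with ab_range show ?thesis by (simp add: diff_root_in_listed_roots)
  next
    case 3
    then have "card (I \<inter> J) = card I" "card (I \<inter> J) = card J"
      using assms(4,7) by (simp_all add: c_def)
    then have "I \<inter> J = I" "I \<inter> J = J"
      using fin by (metis card_subset_eq Int_lower1, metis card_subset_eq Int_lower2)
    then have "(\<lambda>m. sum_root 1 J m + (real k - real c) * sum_root 1 I m) = sum_root (-1) I"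
      using 3 by (auto simp: fun_eq_iff sum_root_def)
    then show ?thesis using assms(3,4) by (simp add: sum_root_in_listed_roots)
  qed
  then show ?thesis
    unfolding reflection by (rule listed_roots_sign_mult[OF assms(5)])
qed

lemma listed_roots_reflect:
  assumes "k > 0" "l \<le> k + 4" "a \<in> listed_roots k l" "b \<in> listed_roots k l"
  shows "refl_Q (\<lambda>v w. - form k l v w) a b \<in> listed_roots k l"
proof -
  have "form k l a a = -2"
    using assms(1,3) listed_roots_subset_rootsR by (auto simp: rootsR_def)
  then have reflection: "refl_Q (\<lambda>v w. - form k l v w) a b = (\<lambda>m. b m + form k l a b * a m)"
    by (rule refl_Q_neg_form)
  from assms(3) show ?thesis
  proof (cases rule: listed_roots_cases)
    case (diff i j)
    then show ?thesis
      unfolding reflection using assms(4)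
      by (simp add: reflect_diff_root listed_roots_permute permutes_swap_id)
  next
    case a_sum: (sum s I)
    from assms(4) show ?thesis
    proof (cases rule: listed_roots_cases)
      case (diff p q)
      with a_sum show ?thesis
        unfolding reflection by (simp add: reflect_sum_root_diff_root)
    next
      case (sum t J)
      with a_sum assms(2) show ?thesis
        unfolding reflection by (simp add: reflect_sum_root_sum_root)
    qed
  qed
qed

lemma root_system_listed_roots:
  assumes "k > 0" "l \<le> k + 4"
  shows "root_system (\<lambda>v w. - form k l v w) (listed_roots k l)"
  using assms finite_listed_roots listed_roots_subset_rootsR[OF assms(1)]
  by (intro root_system_subset_rootsR listed_roots_reflect)

lemma subset_eq_Diff_singletonE:
  assumes "I \<subseteq> A" "finite A" "card A = Suc (card I)"
  obtains a where "a \<in> A" "I = A - {a}"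
proof -
  have "card (A - I) = 1" using assms by (simp add: card_Diff_subset finite_subset)
  then obtain a where "A - I = {a}" by (rule card_1_singletonE)
  with assms(1) show thesis by (intro that[of a]) auto
qed

lemma subset_eq_Diff_doubletonE:
  fixes A :: "'a :: linorder set"
  assumes "I \<subseteq> A" "finite A" "card A = card I + 2"
  obtains a b where "a \<in> A" "b \<in> A" "a < b" "I = A - {a, b}"
proof -
  have "card (A - I) = 2" using assms by (simp add: card_Diff_subset finite_subset)
  then obtain a b where ab: "A - I = {a, b}" "a \<noteq> b" by (meson card_2_iff)
  then have a: "a \<in> A" and b: "b \<in> A" and I: "I = A - {a, b}" using assms(1) by blast+
  show thesis
  proof (cases "a < b")
    case True
    from a b True I show thesis by (rule that)
  next
    case False
    with ab(2) have "b < a" by simp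
    moreover have "I = A - {b, a}" using I by blast
    ultimately show thesis using a b by (intro that)
  qed
qed

lemma root_isoI:
  assumes "\<And>x y. g (\<lambda>j. x j + y j) = (\<lambda>j. g x j + g y j)"
    and "\<And>c x. g (\<lambda>j. c * x j) = (\<lambda>j. c * g x j)"
    and "inj_on g (rspan S)" "g ` S = T"
  shows "root_iso S T"
  using assms unfolding root_iso_def by blast

lemma std_A_memI: "i \<le> n \<Longrightarrow> j \<le> n \<Longrightarrow> i \<noteq> j \<Longrightarrow> vdiff (ell i) (ell j) \<in> std_A n"
  unfolding std_A_def by blast

lemma std_D_memI:
  assumes "i \<noteq> i'" "i < n" "i' < n" "s \<in> {1, -1}" "t \<in> {1, -1}"
  shows "(\<lambda>j. s * ell i j + t * ell i' j) \<in> std_D n"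
proof (cases "i < i'")
  case True
  then show ?thesis using assms unfolding std_D_def by blast
next
  case False
  then have "(\<lambda>j. s * ell i j + t * ell i' j) = (\<lambda>j. t * ell i' j + s * ell i j)" "i' < i"
    using assms(1) by (auto simp: add.commute)
  then show ?thesis using assms unfolding std_D_def by blast
qed

lemma std_A_A1_eq:
  "std_A_A1 (k + 1) = std_A (k + 1)
    \<union> {vdiff (ell (k + 2)) (ell (Suc (k + 2))), vdiff (ell (Suc (k + 2))) (ell (k + 2))}"
  by (simp add: std_A_A1_def)

definition to_std_A :: "nat \<Rightarrow> (nat \<Rightarrow> real) \<Rightarrow> nat \<Rightarrow> real" where
  "to_std_A l x = (\<lambda>j. if j = 0 then - x 0 else if j \<le> l then x j + x 0 else 0)"

definition shift_coords :: "nat \<Rightarrow> (nat \<Rightarrow> real) \<Rightarrow> nat \<Rightarrow> real" where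
  "shift_coords l x = (\<lambda>j. if j < l then x (Suc j) + x 0 else 0)"

definition to_std_A_A1 :: "nat \<Rightarrow> (nat \<Rightarrow> real) \<Rightarrow> nat \<Rightarrow> real" where
  "to_std_A_A1 l x = (\<lambda>j. shift_coords l x j + x 0 * vdiff (ell l) (ell (Suc l)) j)"

lemma inj_on_to_std_A: "inj_on (to_std_A l) (omega_perp k l)"
proof (rule inj_onI)
  fix x y assume x: "x \<in> omega_perp k l" and y: "y \<in> omega_perp k l"
    and eq: "to_std_A l x = to_std_A l y"
  show "x = y"
  proof
    fix m
    have "to_std_A l x 0 = to_std_A l y 0" "to_std_A l x m = to_std_A l y m" using eq by simp_all
    then show "x m = y m"
      using x y by (cases "m = 0"; cases "m \<le> l") (auto simp: to_std_A_def omega_perp_def)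
  qed
qed

lemma inj_on_to_std_A_A1: "inj_on (to_std_A_A1 l) (omega_perp k l)"
proof (rule inj_onI)
  fix x y assume x: "x \<in> omega_perp k l" and y: "y \<in> omega_perp k l"
    and eq: "to_std_A_A1 l x = to_std_A_A1 l y"
  have x0: "x 0 = y 0"
    using fun_cong[OF eq, of l] by (simp add: to_std_A_A1_def shift_coords_def vdiff_ell_apply)
  have coord: "x m = y m" if "m \<in> {1..l}" for m
  proof -
    have "Suc (m - 1) = m" "m - 1 < l" "m - 1 \<noteq> l" "m - 1 \<noteq> Suc l" using that by auto
    then show ?thesis
      using fun_cong[OF eq, of "m - 1"] x0
      by (simp add: to_std_A_A1_def shift_coords_def vdiff_ell_apply)
  qed
  show "x = y"
  proof
    fix m
    show "x m = y m"
      using x y x0 coord[of m] by (cases "m = 0"; cases "m \<le> l") (auto simp: omega_perp_def)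
  qed
qed

text \<open>Summing the coordinates recovers x 0 from the relation defining omega_perp, except when
  l = k + 2.\<close>
lemma inj_on_shift_coords:
  assumes "l \<noteq> k + 2"
  shows "inj_on (shift_coords l) (omega_perp k l)"
proof (rule inj_onI)
  fix x y assume x: "x \<in> omega_perp k l" and y: "y \<in> omega_perp k l"
    and eq: "shift_coords l x = shift_coords l y"
  have coord: "x m + x 0 = y m + y 0" if "m \<in> {1..l}" for m
  proof -
    have "Suc (m - 1) = m" "m - 1 < l" using that by auto
    then show ?thesis using fun_cong[OF eq, of "m - 1"] by (simp add: shift_coords_def)
  qed
  then have "(\<Sum>m=1..l. x m + x 0) = (\<Sum>m=1..l. y m + y 0)" by (rule sum.cong[OF refl])
  then have "(real l - real k - 2) * x 0 = (real l - real k - 2) * y 0"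
    using x y by (simp add: sum.distrib omega_perp_def algebra_simps)
  then have x0: "x 0 = y 0" using assms by simp
  show "x = y"
  proof
    fix m
    show "x m = y m"
      using x y x0 coord[of m] by (cases "m = 0"; cases "m \<le> l") (auto simp: omega_perp_def)
  qed
qed

lemma to_std_A_diff_root:
  assumes "i \<in> {1..l}" "j \<in> {1..l}"
  shows "to_std_A l (vdiff (ell i) (ell j)) = vdiff (ell i) (ell j)"
  using assms by (auto simp: fun_eq_iff to_std_A_def vdiff_ell_apply)

lemma to_std_A_sum_root:
  assumes "a \<in> {1..l}"
  shows "to_std_A l (sum_root s ({1..l} - {a})) = (\<lambda>m. s * vdiff (ell a) (ell 0) m)"
  using assms by (auto simp: fun_eq_iff to_std_A_def sum_root_def vdiff_ell_apply)

lemma shift_coords_diff_root: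
  assumes "i \<in> {1..l}" "j \<in> {1..l}"
  shows "shift_coords l (vdiff (ell i) (ell j)) = vdiff (ell (i - 1)) (ell (j - 1))"
  using assms by (auto simp: fun_eq_iff shift_coords_def vdiff_ell_apply)

lemma shift_coords_sum_root:
  assumes "a \<in> {1..l}" "b \<in> {1..l}" "a \<noteq> b"
  shows "shift_coords l (sum_root s ({1..l} - {a, b}))
    = (\<lambda>m. s * ell (a - 1) m + s * ell (b - 1) m)"
  using assms by (auto simp: fun_eq_iff shift_coords_def sum_root_def ell_def)

lemma to_std_A_A1_diff_root:
  assumes "i \<in> {1..l}" "j \<in> {1..l}"
  shows "to_std_A_A1 l (vdiff (ell i) (ell j)) = vdiff (ell (i - 1)) (ell (j - 1))"
  using assms by (simp add: fun_eq_iff to_std_A_A1_def shift_coords_diff_root vdiff_ell_apply)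

lemma to_std_A_A1_sum_root:
  "to_std_A_A1 l (sum_root s {1..l}) = (\<lambda>m. s * vdiff (ell l) (ell (Suc l)) m)"
  by (auto simp: fun_eq_iff to_std_A_A1_def shift_coords_def sum_root_def)

lemma to_std_A_image: "to_std_A (k + 3) ` listed_roots k (k + 3) = std_A (k + 3)"
proof
  show "to_std_A (k + 3) ` listed_roots k (k + 3) \<subseteq> std_A (k + 3)"
  proof (rule image_subsetI)
    fix v assume "v \<in> listed_roots k (k + 3)"
    then show "to_std_A (k + 3) v \<in> std_A (k + 3)"
    proof (cases rule: listed_roots_cases)
      case (diff i j)
      then show ?thesis by (simp add: to_std_A_diff_root std_A_memI)
    next
      case (sum s I)
      then obtain a where a: "a \<in> {1..k + 3}" "I = {1..k + 3} - {a}"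
        by (elim subset_eq_Diff_singletonE) auto
      have "to_std_A (k + 3) v = (\<lambda>m. s * vdiff (ell a) (ell 0) m)"
        unfolding sum(4) a(2) by (rule to_std_A_sum_root[OF a(1)])
      also have "\<dots> = (if s = 1 then vdiff (ell a) (ell 0) else vdiff (ell 0) (ell a))"
        by (rule sign_mult_vdiff_ell[OF sum(1)])
      finally show ?thesis using a(1) by (simp add: std_A_memI)
    qed
  qed
  show "std_A (k + 3) \<subseteq> to_std_A (k + 3) ` listed_roots k (k + 3)"
  proof
    fix u assume "u \<in> std_A (k + 3)"
    then obtain i j where ij: "i \<le> k + 3" "j \<le> k + 3" "i \<noteq> j" "u = vdiff (ell i) (ell j)"
      unfolding std_A_def by blast
    consider "i \<noteq> 0" "j \<noteq> 0" | "j = 0" | "i = 0" using ij by blast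
    then show "u \<in> to_std_A (k + 3) ` listed_roots k (k + 3)"
    proof cases
      case 1
      then have "vdiff (ell i) (ell j) \<in> listed_roots k (k + 3)"
        using ij by (intro diff_root_in_listed_roots) auto
      with 1 ij show ?thesis by (force simp: to_std_A_diff_root)
    next
      case 2
      with ij have i: "i \<in> {1..k + 3}" by auto
      have "u = to_std_A (k + 3) (sum_root 1 ({1..k + 3} - {i}))"
        unfolding to_std_A_sum_root[OF i] using 2 ij(4) by simp
      moreover have "sum_root 1 ({1..k + 3} - {i}) \<in> listed_roots k (k + 3)"
        using i by (intro sum_root_in_listed_roots) auto
      ultimately show ?thesis by (rule image_eqI)
    next
      case 3
      with ij have j: "j \<in> {1..k + 3}" by auto
      have "u = to_std_A (k + 3) (sum_root (-1) ({1..k + 3} - {j}))"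
        unfolding to_std_A_sum_root[OF j] using 3 ij(4)
        by (simp add: fun_eq_iff vdiff_ell_apply)
      moreover have "sum_root (-1) ({1..k + 3} - {j}) \<in> listed_roots k (k + 3)"
        using j by (intro sum_root_in_listed_roots) auto
      ultimately show ?thesis by (rule image_eqI)
    qed
  qed
qed

lemma shift_coords_image: "shift_coords (k + 4) ` listed_roots k (k + 4) = std_D (k + 4)"
proof
  show "shift_coords (k + 4) ` listed_roots k (k + 4) \<subseteq> std_D (k + 4)"
  proof (rule image_subsetI)
    fix v assume "v \<in> listed_roots k (k + 4)"
    then show "shift_coords (k + 4) v \<in> std_D (k + 4)"
    proof (cases rule: listed_roots_cases)
      case (diff i j)
      have "shift_coords (k + 4) v = (\<lambda>m. 1 * ell (i - 1) m + (-1) * ell (j - 1) m)"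
        unfolding diff(4) shift_coords_diff_root[OF diff(1,2)] by (rule vdiff_ell_eq_combination)
      also have "\<dots> \<in> std_D (k + 4)" using diff by (intro std_D_memI) auto
      finally show ?thesis .
    next
      case (sum s I)
      then obtain a b
        where ab: "a \<in> {1..k + 4}" "b \<in> {1..k + 4}" "a < b" "I = {1..k + 4} - {a, b}"
        by (elim subset_eq_Diff_doubletonE) auto
      have "shift_coords (k + 4) v = (\<lambda>m. s * ell (a - 1) m + s * ell (b - 1) m)"
        unfolding sum(4) ab(4) using ab by (intro shift_coords_sum_root) auto
      moreover have "a - 1 \<noteq> b - 1" using ab by auto
      ultimately show ?thesis using ab sum(1) by (simp add: std_D_memI)
    qed
  qed
  show "std_D (k + 4) \<subseteq> shift_coords (k + 4) ` listed_roots k (k + 4)"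
  proof
    fix u assume "u \<in> std_D (k + 4)"
    then obtain i i' s t where u: "i < i'" "i' < k + 4" "s \<in> {1, -1}" "t \<in> {1, -1}"
      "u = (\<lambda>j. s * ell i j + t * ell i' j)"
      unfolding std_D_def by blast
    have range: "Suc i \<in> {1..k + 4}" "Suc i' \<in> {1..k + 4}" "Suc i \<noteq> Suc i'" using u by auto
    consider "s = t" | "s = 1" "t = -1" | "s = -1" "t = 1" using u(3,4) by auto
    then show "u \<in> shift_coords (k + 4) ` listed_roots k (k + 4)"
    proof cases
      case 1
      have "u = shift_coords (k + 4) (sum_root s ({1..k + 4} - {Suc i, Suc i'}))"
        unfolding shift_coords_sum_root[OF range] using 1 u(5) by simp
      moreover have "sum_root s ({1..k + 4} - {Suc i, Suc i'}) \<in> listed_roots k (k + 4)"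
        using u range by (intro sum_root_in_listed_roots) auto
      ultimately show ?thesis by (rule image_eqI)
    next
      case 2
      have "shift_coords (k + 4) (vdiff (ell (Suc i)) (ell (Suc i')))
          = (\<lambda>m. 1 * ell i m + (-1) * ell i' m)"
        unfolding shift_coords_diff_root[OF range(1,2)] by (simp add: vdiff_ell_eq_combination)
      then have "u = shift_coords (k + 4) (vdiff (ell (Suc i)) (ell (Suc i')))"
        using 2 u(5) by simp
      moreover have "vdiff (ell (Suc i)) (ell (Suc i')) \<in> listed_roots k (k + 4)"
        using range by (rule diff_root_in_listed_roots)
      ultimately show ?thesis by (rule image_eqI)
    next
      case 3
      have "shift_coords (k + 4) (vdiff (ell (Suc i')) (ell (Suc i)))
          = (\<lambda>m. 1 * ell i' m + (-1) * ell i m)"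
        unfolding shift_coords_diff_root[OF range(2,1)] by (simp add: vdiff_ell_eq_combination)
      then have "u = shift_coords (k + 4) (vdiff (ell (Suc i')) (ell (Suc i)))"
        using 3 u(5) by (simp add: fun_eq_iff)
      moreover have "vdiff (ell (Suc i')) (ell (Suc i)) \<in> listed_roots k (k + 4)"
        using range by (intro diff_root_in_listed_roots) auto
      ultimately show ?thesis by (rule image_eqI)
    qed
  qed
qed

lemma to_std_A_A1_image: "to_std_A_A1 (k + 2) ` listed_roots k (k + 2) = std_A_A1 (k + 1)"
proof
  show "to_std_A_A1 (k + 2) ` listed_roots k (k + 2) \<subseteq> std_A_A1 (k + 1)"
  proof (rule image_subsetI)
    fix v assume "v \<in> listed_roots k (k + 2)"
    then show "to_std_A_A1 (k + 2) v \<in> std_A_A1 (k + 1)"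
    proof (cases rule: listed_roots_cases)
      case (diff i j)
      then have "vdiff (ell (i - 1)) (ell (j - 1)) \<in> std_A (k + 1)" by (intro std_A_memI) auto
      with diff show ?thesis unfolding std_A_A1_eq by (simp add: to_std_A_A1_diff_root)
    next
      case (sum s I)
      then have "I = {1..k + 2}" by (intro card_subset_eq) auto
      then have "to_std_A_A1 (k + 2) v = (\<lambda>m. s * vdiff (ell (k + 2)) (ell (Suc (k + 2))) m)"
        unfolding sum(4) by (rule ssubst) (rule to_std_A_A1_sum_root)
      also have "\<dots> = (if s = 1 then vdiff (ell (k + 2)) (ell (Suc (k + 2)))
          else vdiff (ell (Suc (k + 2))) (ell (k + 2)))"
        by (rule sign_mult_vdiff_ell[OF sum(1)])
      finally show ?thesis unfolding std_A_A1_eq by simp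
    qed
  qed
  show "std_A_A1 (k + 1) \<subseteq> to_std_A_A1 (k + 2) ` listed_roots k (k + 2)"
  proof
    fix u assume "u \<in> std_A_A1 (k + 1)"
    then consider (A) "u \<in> std_A (k + 1)"
      | (A1_pos) "u = vdiff (ell (k + 2)) (ell (Suc (k + 2)))"
      | (A1_neg) "u = vdiff (ell (Suc (k + 2))) (ell (k + 2))"
      unfolding std_A_A1_eq by blast
    then show "u \<in> to_std_A_A1 (k + 2) ` listed_roots k (k + 2)"
    proof cases
      case A
      then obtain i j where ij: "i \<le> k + 1" "j \<le> k + 1" "i \<noteq> j" "u = vdiff (ell i) (ell j)"
        unfolding std_A_def by blast
      then have "u = to_std_A_A1 (k + 2) (vdiff (ell (Suc i)) (ell (Suc j)))"
        by (simp add: to_std_A_A1_diff_root)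
      moreover have "vdiff (ell (Suc i)) (ell (Suc j)) \<in> listed_roots k (k + 2)"
        using ij by (intro diff_root_in_listed_roots) auto
      ultimately show ?thesis by (rule image_eqI)
    next
      case A1_pos
      then have "u = to_std_A_A1 (k + 2) (sum_root 1 {1..k + 2})"
        unfolding to_std_A_A1_sum_root by simp
      moreover have "sum_root 1 {1..k + 2} \<in> listed_roots k (k + 2)"
        by (intro sum_root_in_listed_roots) auto
      ultimately show ?thesis by (rule image_eqI)
    next
      case A1_neg
      then have "u = to_std_A_A1 (k + 2) (sum_root (-1) {1..k + 2})"
        unfolding to_std_A_A1_sum_root by (simp add: fun_eq_iff vdiff_ell_apply)
      moreover have "sum_root (-1) {1..k + 2} \<in> listed_roots k (k + 2)"
        by (intro sum_root_in_listed_roots) auto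
      ultimately show ?thesis by (rule image_eqI)
    qed
  qed
qed

lemma root_iso_listed_roots_A_A1:
  assumes "k > 0"
  shows "root_iso (listed_roots k (k + 2)) (std_A_A1 (k + 1))"
proof (rule root_isoI[where g = "to_std_A_A1 (k + 2)"])
  show "to_std_A_A1 (k + 2) (\<lambda>j. x j + y j)
      = (\<lambda>j. to_std_A_A1 (k + 2) x j + to_std_A_A1 (k + 2) y j)" for x y
    by (auto simp: fun_eq_iff to_std_A_A1_def shift_coords_def algebra_simps)
  show "to_std_A_A1 (k + 2) (\<lambda>j. c * x j) = (\<lambda>j. c * to_std_A_A1 (k + 2) x j)" for c x
    by (auto simp: fun_eq_iff to_std_A_A1_def shift_coords_def algebra_simps)
  show "inj_on (to_std_A_A1 (k + 2)) (rspan (listed_roots k (k + 2)))"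
    using inj_on_to_std_A_A1 rspan_subset_omega_perp[OF assms listed_roots_subset_rootsR[OF assms]]
    by (rule inj_on_subset)
  show "to_std_A_A1 (k + 2) ` listed_roots k (k + 2) = std_A_A1 (k + 1)" by (rule to_std_A_A1_image)
qed

lemma root_iso_listed_roots_A:
  assumes "k > 0"
  shows "root_iso (listed_roots k (k + 3)) (std_A (k + 3))"
proof (rule root_isoI[where g = "to_std_A (k + 3)"])
  show "to_std_A (k + 3) (\<lambda>j. x j + y j)
      = (\<lambda>j. to_std_A (k + 3) x j + to_std_A (k + 3) y j)" for x y
    by (auto simp: fun_eq_iff to_std_A_def)
  show "to_std_A (k + 3) (\<lambda>j. c * x j) = (\<lambda>j. c * to_std_A (k + 3) x j)" for c x
    by (auto simp: fun_eq_iff to_std_A_def algebra_simps)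
  show "inj_on (to_std_A (k + 3)) (rspan (listed_roots k (k + 3)))"
    using inj_on_to_std_A rspan_subset_omega_perp[OF assms listed_roots_subset_rootsR[OF assms]]
    by (rule inj_on_subset)
  show "to_std_A (k + 3) ` listed_roots k (k + 3) = std_A (k + 3)" by (rule to_std_A_image)
qed

lemma root_iso_listed_roots_D:
  assumes "k > 0"
  shows "root_iso (listed_roots k (k + 4)) (std_D (k + 4))"
proof (rule root_isoI[where g = "shift_coords (k + 4)"])
  show "shift_coords (k + 4) (\<lambda>j. x j + y j)
      = (\<lambda>j. shift_coords (k + 4) x j + shift_coords (k + 4) y j)" for x y
    by (auto simp: fun_eq_iff shift_coords_def)
  show "shift_coords (k + 4) (\<lambda>j. c * x j) = (\<lambda>j. c * shift_coords (k + 4) x j)" for c x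
    by (auto simp: fun_eq_iff shift_coords_def algebra_simps)
  have "inj_on (shift_coords (k + 4)) (omega_perp k (k + 4))" by (rule inj_on_shift_coords) simp
  then show "inj_on (shift_coords (k + 4)) (rspan (listed_roots k (k + 4)))"
    using rspan_subset_omega_perp[OF assms listed_roots_subset_rootsR[OF assms]]
    by (rule inj_on_subset)
  show "shift_coords (k + 4) ` listed_roots k (k + 4) = std_D (k + 4)" by (rule shift_coords_image)
qed

theorem proposition5p5:
  fixes k l :: nat
  assumes "k > 0" and "l \<in> {k+2, k+3, k+4}"
  shows "listed_roots k l \<subseteq> rootsR k l
    \<and> root_system (\<lambda>v w. - form k l v w) (listed_roots k l)
    \<and> (l = k + 2 \<longrightarrow> root_iso (listed_roots k l) (std_A_A1 (k + 1)))
    \<and> (l = k + 3 \<longrightarrow> root_iso (listed_roots k l) (std_A (k + 3)))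
    \<and> (l = k + 4 \<longrightarrow> root_iso (listed_roots k l) (std_D (k + 4)))"
proof (intro conjI impI)
  show "listed_roots k l \<subseteq> rootsR k l"
    using assms(1) by (rule listed_roots_subset_rootsR)
  show "root_system (\<lambda>v w. - form k l v w) (listed_roots k l)"
    using assms by (intro root_system_listed_roots) auto
  show "root_iso (listed_roots k l) (std_A_A1 (k + 1))" if "l = k + 2"
    using root_iso_listed_roots_A_A1[OF assms(1)] that by simp
  show "root_iso (listed_roots k l) (std_A (k + 3))" if "l = k + 3"
    using root_iso_listed_roots_A[OF assms(1)] that by simp
  show "root_iso (listed_roots k l) (std_D (k + 4))" if "l = k + 4"
    using root_iso_listed_roots_D[OF assms(1)] that by simp
qed

end
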